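(* Let $A$ be a binary $n\times m$ matrix. Then $A$ has at most one binary base that is disjoint in rows.
   Context: A set $X$ of $\{0,1\}$-vectors spans a vector $y$ (binary sense) if $y=\sum_{x\in X}c_xx$ with $c_x\in\{0,1\}$ and ordinary addition. A binary base of $A$ is a set of $\{0,1\}$ column vectors of length $n$ spanning every column of $A$, of minimum cardinality among such spanning sets (this minimum equals the binary rank of $A$). A base is disjoint in rows if no two distinct vectors of the base have a $1$ in the same coordinate. *)

theory Defs
  imports "HOL-Analysis.Analysis"
begin

text \<open>An n x m matrix is A :: int^'m^'n (rows indexed by 'n, columns by 'm);
its columns are the vectors column j A :: int^'n.\<close>

definition binary_vec :: "int ^ 'n \<Rightarrow> bool" where
  "binary_vec v \<longleftrightarrow> (\<forall>i. v $ i \<in> {0, 1})"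

definition binary_matrix :: "int ^ 'm ^ 'n \<Rightarrow> bool" where
  "binary_matrix A \<longleftrightarrow> (\<forall>i j. A $ i $ j \<in> {0, 1})"

text \<open>X spans y in the binary sense: y is a 0/1-combination of X with ordinary addition.\<close>
definition binary_spans :: "(int ^ 'n) set \<Rightarrow> int ^ 'n \<Rightarrow> bool" where
  "binary_spans X y \<longleftrightarrow> (\<exists>c. (\<forall>x\<in>X. c x \<in> {0, 1}) \<and> y = (\<Sum>x\<in>X. c x *s x))"

definition spans_all_columns :: "(int ^ 'n) set \<Rightarrow> int ^ 'm ^ 'n \<Rightarrow> bool" where
  "spans_all_columns X A \<longleftrightarrow> finite X \<and> (\<forall>x\<in>X. binary_vec x) \<and> (\<forall>j. binary_spans X (column j A))"

definition binary_base :: "(int ^ 'n) set \<Rightarrow> int ^ 'm ^ 'n \<Rightarrow> bool" where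
  "binary_base B A \<longleftrightarrow> spans_all_columns B A \<and>
     (\<forall>B'. spans_all_columns B' A \<longrightarrow> card B \<le> card B')"

definition disjoint_in_rows :: "(int ^ 'n) set \<Rightarrow> bool" where
  "disjoint_in_rows B \<longleftrightarrow> (\<forall>x\<in>B. \<forall>y\<in>B. x \<noteq> y \<longrightarrow> (\<forall>i. \<not> (x $ i = 1 \<and> y $ i = 1)))"

end

theory Submission
  imports Defs
begin

text \<open>If \<open>B\<close> is a row-disjoint binary base of \<open>A\<close> with coefficients \<open>c\<close>,
  then every row \<open>i\<close> in the support of \<open>x \<in> B\<close> equals the coefficient pattern
  \<open>(c j x)\<^sub>j\<close>, and rows outside all supports vanish. Minimality of \<open>B\<close> forbids a vector
  with zero pattern (it could be dropped) and two vectors with equal patterns (they could be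
  merged into their sum). Hence the support of each \<open>x \<in> B\<close> is exactly a class of equal
  nonzero rows, so \<open>B\<close> is determined by \<open>A\<close> alone.\<close>

definition row_class :: "int ^ 'm ^ 'n \<Rightarrow> 'n \<Rightarrow> int ^ 'n" where
  "row_class A i = (\<chi> k. if A $ k = A $ i then 1 else 0)"

lemma binary_vecD: "binary_vec x \<Longrightarrow> x $ k = 0 \<or> x $ k = 1"
  by (auto simp: binary_vec_def)

lemma disjoint_in_rowsD:
  assumes "disjoint_in_rows B" "x \<in> B" "y \<in> B" "x \<noteq> y" "x $ k = 1" "binary_vec y"
  shows "y $ k = 0"
  using assms(1-5) binary_vecD[OF assms(6), of k] unfolding disjoint_in_rows_def by blast

lemma binary_vec_add_disjoint:
  assumes "disjoint_in_rows B" "x \<in> B" "y \<in> B" "x \<noteq> y" "binary_vec x" "binary_vec y"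
  shows "binary_vec (x + y)"
  unfolding binary_vec_def
proof
  fix k
  show "(x + y) $ k \<in> {0, 1}"
    using binary_vecD[OF assms(5), of k] binary_vecD[OF assms(6), of k]
      disjoint_in_rowsD[OF assms(1-4) _ assms(6), of k] by auto
qed

lemma sum_scaled_component_disjoint:
  fixes f :: "int ^ 'n \<Rightarrow> int"
  assumes "finite B" "disjoint_in_rows B" "\<forall>y\<in>B. binary_vec y" "x \<in> B" "x $ i = 1"
  shows "(\<Sum>y\<in>B. f y *s y) $ i = f x"
proof -
  have "(\<Sum>y\<in>B. f y *s y) $ i = f x * x $ i + (\<Sum>y\<in>B - {x}. f y * y $ i)"
    using assms(1,4) by (simp add: sum_component sum.remove)
  also have "(\<Sum>y\<in>B - {x}. f y * y $ i) = 0"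
    using disjoint_in_rowsD[OF assms(2,4) _ _ assms(5)] assms(3) by (intro sum.neutral) auto
  finally show ?thesis using assms(5) by simp
qed

lemma sum_scaled_component_outside:
  fixes f :: "int ^ 'n \<Rightarrow> int"
  shows "\<forall>y\<in>B. y $ i = 0 \<Longrightarrow> (\<Sum>y\<in>B. f y *s y) $ i = 0"
  by (simp add: sum_component)

lemma binary_spans_Diff:
  assumes "finite X" "z \<in> X" "\<forall>x\<in>X. c x \<in> {0, 1}" "v = (\<Sum>x\<in>X. c x *s x)" "c z *s z = 0"
  shows "binary_spans (X - {z}) v"
proof -
  have "v = (\<Sum>x\<in>X - {z}. c x *s x)"
    using assms(1,2,4,5) by (simp add: sum.remove)
  then show ?thesis unfolding binary_spans_def using assms(3) by blast
qed

lemma binary_spans_merge: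
  assumes "finite X" "x \<in> X" "y \<in> X" "x \<noteq> y" "x + y \<notin> X - {x, y}"
    and "\<forall>z\<in>X. c z \<in> {0, 1}" "v = (\<Sum>z\<in>X. c z *s z)" "c x = c y"
  shows "binary_spans (insert (x + y) (X - {x, y})) v"
proof -
  define c' where "c' z = (if z = x + y then c x else c z)" for z
  have "X - {x} - {y} = X - {x, y}" by auto
  then have "v = c x *s x + c y *s y + (\<Sum>z\<in>X - {x, y}. c z *s z)"
    using assms(1-4,7) by (simp add: sum.remove[of X x] sum.remove[of "X - {x}" y] add.assoc)
  also have "c x *s x + c y *s y = c' (x + y) *s (x + y)"
    using assms(8) by (simp add: c'_def vector_ssub_ldistrib)
  also have "(\<Sum>z\<in>X - {x, y}. c z *s z) = (\<Sum>z\<in>X - {x, y}. c' z *s z)"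
    using assms(5) by (intro sum.cong) (auto simp: c'_def)
  finally have "v = (\<Sum>z\<in>insert (x + y) (X - {x, y}). c' z *s z)"
    using assms(1,5) by simp
  moreover have "\<forall>z\<in>insert (x + y) (X - {x, y}). c' z \<in> {0, 1}"
    using assms(2,6) by (auto simp: c'_def)
  ultimately show ?thesis unfolding binary_spans_def by blast
qed

locale disjoint_binary_base =
  fixes A :: "int ^ 'm ^ 'n" and B :: "(int ^ 'n) set" and c :: "'m \<Rightarrow> int ^ 'n \<Rightarrow> int"
  assumes base: "binary_base B A"
    and disjoint: "disjoint_in_rows B"
    and coeff_01: "\<forall>x\<in>B. c j x \<in> {0, 1}"
    and column_eq: "column j A = (\<Sum>x\<in>B. c j x *s x)"
begin

definition pattern :: "int ^ 'n \<Rightarrow> int ^ 'm" where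
  "pattern x = (\<chi> j. c j x)"

lemma finite_base: "finite B"
  and binary_elements: "\<forall>x\<in>B. binary_vec x"
  and no_smaller_spanning_set: "spans_all_columns B' A \<Longrightarrow> \<not> card B' < card B"
  using base unfolding binary_base_def spans_all_columns_def by (auto simp: not_less)

lemma entry_eq: "A $ i $ j = (\<Sum>x\<in>B. c j x *s x) $ i"
  using column_eq[of j] by (simp add: vec_eq_iff column_def)

lemma row_eq_pattern: "x \<in> B \<Longrightarrow> x $ i = 1 \<Longrightarrow> A $ i = pattern x"
  using sum_scaled_component_disjoint[OF finite_base disjoint binary_elements]
  by (simp add: vec_eq_iff pattern_def entry_eq)

lemma row_eq_zero: "\<forall>x\<in>B. x $ i = 0 \<Longrightarrow> A $ i = 0"
  using sum_scaled_component_outside by (simp add: vec_eq_iff entry_eq)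

lemma exists_support_nonzero_pattern:
  assumes x: "x \<in> B"
  shows "\<exists>i. x $ i = 1 \<and> pattern x \<noteq> 0"
proof (rule ccontr)
  assume "\<nexists>i. x $ i = 1 \<and> pattern x \<noteq> 0"
  then have "c j x * x $ k = 0" for j k
    using binary_vecD[of x k] binary_elements x
    by (cases "x $ k = 1") (auto simp: vec_eq_iff pattern_def)
  then have "c j x *s x = 0" for j
    by (simp add: vec_eq_iff)
  then have "spans_all_columns (B - {x}) A"
    using binary_elements finite_base binary_spans_Diff[OF finite_base x coeff_01 column_eq]
    unfolding spans_all_columns_def by blast
  moreover have "card (B - {x}) < card B"
    using finite_base x by (rule card_Diff1_less)
  ultimately show False using no_smaller_spanning_set by blast
qed

lemma pattern_inj:
  assumes x: "x \<in> B" and y: "y \<in> B" and xy: "x \<noteq> y"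
  shows "pattern x \<noteq> pattern y"
proof
  assume same: "pattern x = pattern y"
  obtain i where xi: "x $ i = 1"
    using exists_support_nonzero_pattern[OF x] by blast
  have fresh: "x + y \<notin> B - {x, y}"
  proof
    assume sum_in: "x + y \<in> B - {x, y}"
    have "(x + y) $ i = 1"
      using xi disjoint_in_rowsD[OF disjoint x y xy xi] binary_elements y by simp
    moreover have "x + y \<noteq> x" using sum_in by auto
    ultimately have "x $ i = 0"
      using disjoint_in_rowsD[OF disjoint _ x] sum_in binary_elements x by blast
    then show False using xi by simp
  qed
  let ?B' = "insert (x + y) (B - {x, y})"
  have "spans_all_columns ?B' A"
    unfolding spans_all_columns_def
  proof (intro conjI allI)
    show "finite ?B'" using finite_base by simp
    show "\<forall>z\<in>?B'. binary_vec z"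
      using binary_elements binary_vec_add_disjoint[OF disjoint x y xy] x y by auto
    show "binary_spans ?B' (column j A)" for j
      using same by (intro binary_spans_merge[OF finite_base x y xy fresh coeff_01 column_eq])
        (simp add: pattern_def vec_eq_iff)
  qed
  moreover have "card ?B' < card B"
  proof -
    have "card B \<ge> 2"
      using card_mono[OF finite_base, of "{x, y}"] x y xy by simp
    moreover have "card ?B' = card B - 2 + 1"
      using finite_base fresh x y xy by (simp add: card_Diff_subset)
    ultimately show ?thesis by simp
  qed
  ultimately show False using no_smaller_spanning_set by blast
qed

lemma support_iff_same_row:
  assumes x: "x \<in> B" and xi: "x $ i = 1"
  shows "x $ k = 1 \<longleftrightarrow> A $ k = A $ i"
proof
  assume "x $ k = 1"
  then show "A $ k = A $ i" using row_eq_pattern x xi by simp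
next
  assume same_row: "A $ k = A $ i"
  show "x $ k = 1"
  proof (rule ccontr)
    assume "x $ k \<noteq> 1"
    show False
    proof (cases "\<exists>y\<in>B. y $ k = 1")
      case True
      then obtain y where y: "y \<in> B" "y $ k = 1" by blast
      with \<open>x $ k \<noteq> 1\<close> have "y \<noteq> x" by auto
      then show False
        using pattern_inj[OF y(1) x] row_eq_pattern[OF y] row_eq_pattern[OF x xi] same_row
        by simp
    next
      case False
      then have "A $ k = 0"
        using binary_elements binary_vecD by (blast intro: row_eq_zero)
      moreover have "pattern x \<noteq> 0"
        using exists_support_nonzero_pattern[OF x] by blast
      ultimately show False
        using row_eq_pattern[OF x xi] same_row by simp
    qed
  qed
qed

lemma eq_row_class:
  assumes x: "x \<in> B" and xi: "x $ i = 1"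
  shows "x = row_class A i"
proof (rule vec_eq_iff[THEN iffD2], intro allI)
  fix k
  show "x $ k = row_class A i $ k"
    using support_iff_same_row[OF x xi, of k] binary_vecD[of x k] binary_elements x
    by (auto simp: row_class_def)
qed

lemma eq_row_classes: "B = {row_class A i | i. A $ i \<noteq> 0}"
proof (intro set_eqI iffI)
  fix x assume x: "x \<in> B"
  then obtain i where "x $ i = 1" "pattern x \<noteq> 0"
    using exists_support_nonzero_pattern by blast
  then show "x \<in> {row_class A i | i. A $ i \<noteq> 0}"
    using x eq_row_class row_eq_pattern by fastforce
next
  fix z assume "z \<in> {row_class A i | i. A $ i \<noteq> 0}"
  then obtain i where z: "z = row_class A i" and "A $ i \<noteq> 0" by blast
  then obtain x where "x \<in> B" "x $ i = 1"
    using row_eq_zero binary_elements binary_vecD by blast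
  then show "z \<in> B" using eq_row_class z by simp
qed

end

lemma disjoint_binary_base_eq_row_classes:
  fixes A :: "int ^ 'm ^ 'n"
  assumes "binary_base B A" "disjoint_in_rows B"
  shows "B = {row_class A i | i. A $ i \<noteq> 0}"
proof -
  have "\<forall>j. \<exists>c. (\<forall>x\<in>B. c x \<in> {0, 1}) \<and> column j A = (\<Sum>x\<in>B. c x *s x)"
    using assms(1) unfolding binary_base_def spans_all_columns_def binary_spans_def by blast
  then obtain c where "\<And>j. (\<forall>x\<in>B. c j x \<in> {0, 1}) \<and> column j A = (\<Sum>x\<in>B. c j x *s x)"
    by metis
  then interpret disjoint_binary_base A B c
    using assms by unfold_locales auto
  show ?thesis by (rule eq_row_classes)
qed

theorem mainTheorem11:
  fixes A :: "int ^ 'm ^ 'n"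
  assumes "binary_matrix A"
  shows "\<forall>B1 B2. binary_base B1 A \<and> disjoint_in_rows B1 \<and>
                 binary_base B2 A \<and> disjoint_in_rows B2 \<longrightarrow> B1 = B2"
  using disjoint_binary_base_eq_row_classes by blast

end
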